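(* Let $L\subseteq Q$ be a dense extension of Lie algebras with $Q$ multiplicatively semiprime. Then $A_0$ is a semiprime associative algebra.
   Context: Lie algebras over a commutative unital ring $\Phi$. $\mathrm{ad}_x(y)=[x,y]$; $A(Q)$ is the associative subalgebra of $\mathrm{End}_\Phi(Q)$ generated by all $\mathrm{ad}_x$, $x\in Q$; $M(Q)$ is the subalgebra generated by the identity and all $\mathrm{ad}_x$. $A_0=\{\mu\in A(Q):\mu(L)\subseteq L\}$. An extension $L\subseteq Q$ is dense if the only $\mu\in M(Q)$ with $\mu(L)=0$ is $\mu=0$. A Lie algebra $Q$ is semiprime if $[I,I]\ne0$ for every nonzero ideal $I$; $Q$ is multiplicatively semiprime if both $Q$ and the associative algebra $M(Q)$ are semiprime. *)

theory Defs
  imports Main "HOL.Modules"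
begin

definition lie_algebra :: "('r::comm_ring_1 \<Rightarrow> 'q::ab_group_add \<Rightarrow> 'q) \<Rightarrow> ('q \<Rightarrow> 'q \<Rightarrow> 'q) \<Rightarrow> bool" where
  "lie_algebra s br \<longleftrightarrow> module s
     \<and> (\<forall>x y z. br (x + y) z = br x z + br y z)
     \<and> (\<forall>x y z. br x (y + z) = br x y + br x z)
     \<and> (\<forall>c x y. br (s c x) y = s c (br x y))
     \<and> (\<forall>c x y. br x (s c y) = s c (br x y))
     \<and> (\<forall>x. br x x = 0)
     \<and> (\<forall>x y z. br x (br y z) + br y (br z x) + br z (br x y) = 0)"

definition lie_subalgebra :: "('r::comm_ring_1 \<Rightarrow> 'q::ab_group_add \<Rightarrow> 'q) \<Rightarrow> ('q \<Rightarrow> 'q \<Rightarrow> 'q) \<Rightarrow> 'q set \<Rightarrow> bool" where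
  "lie_subalgebra s br L \<longleftrightarrow> 0 \<in> L \<and> (\<forall>x\<in>L. \<forall>y\<in>L. x + y \<in> L)
     \<and> (\<forall>c. \<forall>x\<in>L. s c x \<in> L) \<and> (\<forall>x\<in>L. \<forall>y\<in>L. br x y \<in> L)"

definition lie_ideal :: "('r::comm_ring_1 \<Rightarrow> 'q::ab_group_add \<Rightarrow> 'q) \<Rightarrow> ('q \<Rightarrow> 'q \<Rightarrow> 'q) \<Rightarrow> 'q set \<Rightarrow> bool" where
  "lie_ideal s br I \<longleftrightarrow> 0 \<in> I \<and> (\<forall>x\<in>I. \<forall>y\<in>I. x + y \<in> I)
     \<and> (\<forall>c. \<forall>x\<in>I. s c x \<in> I) \<and> (\<forall>x. \<forall>y\<in>I. br x y \<in> I)"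

text \<open>Q semiprime: [I,I] \<noteq> 0 for every nonzero ideal I ([I,I] is spanned by the brackets).\<close>
definition lie_semiprime :: "('r::comm_ring_1 \<Rightarrow> 'q::ab_group_add \<Rightarrow> 'q) \<Rightarrow> ('q \<Rightarrow> 'q \<Rightarrow> 'q) \<Rightarrow> bool" where
  "lie_semiprime s br \<longleftrightarrow>
     (\<forall>I. lie_ideal s br I \<and> I \<noteq> {0} \<longrightarrow> (\<exists>a\<in>I. \<exists>b\<in>I. br a b \<noteq> 0))"

inductive_set assoc_gen :: "('r::comm_ring_1 \<Rightarrow> 'q::ab_group_add \<Rightarrow> 'q) \<Rightarrow> ('q \<Rightarrow> 'q) set \<Rightarrow> ('q \<Rightarrow> 'q) set"
  for s :: "'r \<Rightarrow> 'q \<Rightarrow> 'q" and G :: "('q \<Rightarrow> 'q) set" where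
  gen: "f \<in> G \<Longrightarrow> f \<in> assoc_gen s G"
| zero: "(\<lambda>_. 0) \<in> assoc_gen s G"
| add: "f \<in> assoc_gen s G \<Longrightarrow> g \<in> assoc_gen s G \<Longrightarrow> (\<lambda>v. f v + g v) \<in> assoc_gen s G"
| smult: "f \<in> assoc_gen s G \<Longrightarrow> (\<lambda>v. s c (f v)) \<in> assoc_gen s G"
| comp: "f \<in> assoc_gen s G \<Longrightarrow> g \<in> assoc_gen s G \<Longrightarrow> f \<circ> g \<in> assoc_gen s G"

definition A_alg :: "('r::comm_ring_1 \<Rightarrow> 'q::ab_group_add \<Rightarrow> 'q) \<Rightarrow> ('q \<Rightarrow> 'q \<Rightarrow> 'q) \<Rightarrow> ('q \<Rightarrow> 'q) set" where
  "A_alg s br = assoc_gen s (range br)"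

definition M_alg :: "('r::comm_ring_1 \<Rightarrow> 'q::ab_group_add \<Rightarrow> 'q) \<Rightarrow> ('q \<Rightarrow> 'q \<Rightarrow> 'q) \<Rightarrow> ('q \<Rightarrow> 'q) set" where
  "M_alg s br = assoc_gen s (insert id (range br))"

definition A0 :: "('r::comm_ring_1 \<Rightarrow> 'q::ab_group_add \<Rightarrow> 'q) \<Rightarrow> ('q \<Rightarrow> 'q \<Rightarrow> 'q) \<Rightarrow> 'q set \<Rightarrow> ('q \<Rightarrow> 'q) set" where
  "A0 s br L = {\<mu> \<in> A_alg s br. \<mu> ` L \<subseteq> L}"

definition dense_ext :: "('r::comm_ring_1 \<Rightarrow> 'q::ab_group_add \<Rightarrow> 'q) \<Rightarrow> ('q \<Rightarrow> 'q \<Rightarrow> 'q) \<Rightarrow> 'q set \<Rightarrow> bool" where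
  "dense_ext s br L \<longleftrightarrow> (\<forall>\<mu>\<in>M_alg s br. (\<forall>x\<in>L. \<mu> x = 0) \<longrightarrow> \<mu> = (\<lambda>_. 0))"

definition assoc_subalgebra :: "('r::comm_ring_1 \<Rightarrow> 'q::ab_group_add \<Rightarrow> 'q) \<Rightarrow> ('q \<Rightarrow> 'q) set \<Rightarrow> bool" where
  "assoc_subalgebra s R \<longleftrightarrow> (\<lambda>_. 0) \<in> R \<and> (\<forall>f\<in>R. \<forall>g\<in>R. (\<lambda>v. f v + g v) \<in> R)
     \<and> (\<forall>c. \<forall>f\<in>R. (\<lambda>v. s c (f v)) \<in> R) \<and> (\<forall>f\<in>R. \<forall>g\<in>R. f \<circ> g \<in> R)"

definition assoc_ideal :: "('r::comm_ring_1 \<Rightarrow> 'q::ab_group_add \<Rightarrow> 'q) \<Rightarrow> ('q \<Rightarrow> 'q) set \<Rightarrow> ('q \<Rightarrow> 'q) set \<Rightarrow> bool" where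
  "assoc_ideal s R I \<longleftrightarrow> I \<subseteq> R \<and> (\<lambda>_. 0) \<in> I \<and> (\<forall>f\<in>I. \<forall>g\<in>I. (\<lambda>v. f v + g v) \<in> I)
     \<and> (\<forall>c. \<forall>f\<in>I. (\<lambda>v. s c (f v)) \<in> I) \<and> (\<forall>a\<in>R. \<forall>f\<in>I. a \<circ> f \<in> I \<and> f \<circ> a \<in> I)"

text \<open>Semiprime associative algebra: no nonzero ideal I with I*I = 0
  (I*I is spanned by the products, so I*I = 0 iff all products vanish).\<close>
definition assoc_semiprime :: "('r::comm_ring_1 \<Rightarrow> 'q::ab_group_add \<Rightarrow> 'q) \<Rightarrow> ('q \<Rightarrow> 'q) set \<Rightarrow> bool" where
  "assoc_semiprime s R \<longleftrightarrow>
     (\<forall>I. assoc_ideal s R I \<and> (\<forall>f\<in>I. \<forall>g\<in>I. f \<circ> g = (\<lambda>_. 0)) \<longrightarrow> I = {\<lambda>_. 0})"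

definition mult_semiprime :: "('r::comm_ring_1 \<Rightarrow> 'q::ab_group_add \<Rightarrow> 'q) \<Rightarrow> ('q \<Rightarrow> 'q \<Rightarrow> 'q) \<Rightarrow> bool" where
  "mult_semiprime s br \<longleftrightarrow> lie_semiprime s br \<and> assoc_semiprime s (M_alg s br)"

end

theory Submission
  imports Defs
begin

(* Let I be an ideal of A_0 with I I = 0. The maps \<rho> in M(Q) with I \<rho> I = 0 form a subspace
   containing id, and it is stable under right multiplication by every ad_x: by density,
   \<mu>1 \<rho> ad_x \<mu>2 = 0 may be tested on L, where antisymmetry turns it into \<mu>1 \<rho> ad_(\<mu>2 y) x, and
   \<mu>1 \<rho> ad_(\<mu>2 y) vanishes on L because ad_z \<mu>2 lies in I for z in L. Hence \<mu> M(Q) \<mu> = 0 for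
   every \<mu> in I, and in the semiprime unital algebra M(Q) this forces \<mu> = 0: the ideal generated
   by \<mu> has zero square. *)

lemma assoc_subalgebra_assoc_gen: "assoc_subalgebra s (assoc_gen s G)"
  unfolding assoc_subalgebra_def
  by (intro conjI ballI allI assoc_gen.zero assoc_gen.add assoc_gen.smult assoc_gen.comp)

lemma assoc_gen_least:
  assumes R: "assoc_subalgebra s R" and G: "G \<subseteq> R"
  shows "assoc_gen s G \<subseteq> R"
proof
  fix f assume "f \<in> assoc_gen s G"
  then show "f \<in> R"
    using R G unfolding assoc_subalgebra_def by induction blast+
qed

lemma assoc_gen_mono: "G \<subseteq> H \<Longrightarrow> assoc_gen s G \<subseteq> assoc_gen s H"
  by (meson assoc_gen.gen assoc_gen_least assoc_subalgebra_assoc_gen subset_iff)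

lemma assoc_subalgebra_module_hom:
  assumes "module s"
  shows "assoc_subalgebra s {f. module_hom s s f}"
proof -
  interpret module_pair s s
    using assms by (simp add: module_pair_def)
  show ?thesis
    unfolding assoc_subalgebra_def
    by (auto intro: module_hom_zero module_hom_add module_hom_scale module_hom_compose)
qed

lemma assoc_ideal_Inter:
  assumes "\<And>J. J \<in> F \<Longrightarrow> assoc_ideal s R J" and "F \<noteq> {}"
  shows "assoc_ideal s R (\<Inter>F)"
  using assms unfolding assoc_ideal_def by blast

lemma assoc_ideal_right_annihilator:
  assumes R: "assoc_subalgebra s R" and hom: "\<And>f. f \<in> R \<Longrightarrow> module_hom s s f" and k: "k \<in> R"
  shows "assoc_ideal s R {\<nu> \<in> R. \<forall>\<rho>\<in>R. k \<circ> \<rho> \<circ> \<nu> = (\<lambda>_. 0)}"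
proof -
  have "module s"
    using hom k module_hom_iff by blast
  then have s0: "s c 0 = 0" for c
    by (rule module.scale_zero_right)
  have kr: "module_hom s s (k \<circ> \<rho>)" if "\<rho> \<in> R" for \<rho>
    using hom k that module_hom_compose by blast
  have left: "k \<circ> \<rho> \<circ> (a \<circ> \<nu>) = (\<lambda>_. 0)"
    if "\<rho> \<in> R" "a \<in> R" "\<forall>\<rho>\<in>R. k \<circ> \<rho> \<circ> \<nu> = (\<lambda>_. 0)" for \<rho> a \<nu>
  proof -
    have "\<rho> \<circ> a \<in> R"
      using R that unfolding assoc_subalgebra_def by blast
    then show ?thesis
      using that(3) by (metis comp_assoc)
  qed
  show ?thesis
    using R left kr[THEN module_hom.zero] kr[THEN module_hom.add] kr[THEN module_hom.scale]
    unfolding assoc_ideal_def assoc_subalgebra_def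
    by (auto simp: fun_eq_iff s0)
qed

lemma assoc_ideal_left_annihilator:
  assumes R: "assoc_subalgebra s R" and hom: "\<And>f. f \<in> R \<Longrightarrow> module_hom s s f" and k: "k \<in> R"
  shows "assoc_ideal s R {\<nu> \<in> R. \<forall>\<rho>\<in>R. \<nu> \<circ> \<rho> \<circ> k = (\<lambda>_. 0)}"
proof -
  have "module s"
    using hom k module_hom_iff by blast
  then have s0: "s c 0 = 0" for c
    by (rule module.scale_zero_right)
  have right: "\<nu> \<circ> a \<circ> \<rho> \<circ> k = (\<lambda>_. 0)"
    if "\<rho> \<in> R" "a \<in> R" "\<forall>\<rho>\<in>R. \<nu> \<circ> \<rho> \<circ> k = (\<lambda>_. 0)" for \<rho> a \<nu>
  proof -
    have "a \<circ> \<rho> \<in> R"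
      using R that unfolding assoc_subalgebra_def by blast
    then show ?thesis
      using that(3) by (metis comp_assoc)
  qed
  show ?thesis
    using R right hom[THEN module_hom.zero]
    unfolding assoc_ideal_def assoc_subalgebra_def
    by (auto simp: fun_eq_iff s0)
qed

lemma assoc_semiprime_sandwich_eq_zero:
  assumes semiprime: "assoc_semiprime s R" and R: "assoc_subalgebra s R" and id: "id \<in> R"
    and hom: "\<And>f. f \<in> R \<Longrightarrow> module_hom s s f"
    and \<mu>: "\<mu> \<in> R" and sandwich: "\<forall>\<rho>\<in>R. \<mu> \<circ> \<rho> \<circ> \<mu> = (\<lambda>_. 0)"
  shows "\<mu> = (\<lambda>_. 0)"
proof -
  define K where "K = \<Inter>{J. assoc_ideal s R J \<and> \<mu> \<in> J}"
  have "assoc_ideal s R R"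
    using R unfolding assoc_ideal_def assoc_subalgebra_def by blast
  then have K: "assoc_ideal s R K"
    unfolding K_def using \<mu> by (intro assoc_ideal_Inter) auto
  have K_least: "K \<subseteq> J" if "assoc_ideal s R J" "\<mu> \<in> J" for J
    unfolding K_def using that by blast
  have "K \<subseteq> {\<nu> \<in> R. \<forall>\<rho>\<in>R. \<mu> \<circ> \<rho> \<circ> \<nu> = (\<lambda>_. 0)}"
    using \<mu> sandwich by (intro K_least assoc_ideal_right_annihilator R hom) auto
  then have "K \<subseteq> {\<nu> \<in> R. \<forall>\<rho>\<in>R. \<nu> \<circ> \<rho> \<circ> k = (\<lambda>_. 0)}" if "k \<in> K" for k
    using \<mu> that by (intro K_least assoc_ideal_left_annihilator R hom) auto
  then have "f \<circ> id \<circ> g = (\<lambda>_. 0)" if "f \<in> K" "g \<in> K" for f g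
    using id that by blast
  then have "\<forall>f\<in>K. \<forall>g\<in>K. f \<circ> g = (\<lambda>_. 0)"
    by simp
  then have "K = {\<lambda>_. 0}"
    using semiprime K unfolding assoc_semiprime_def by blast
  moreover have "\<mu> \<in> K"
    unfolding K_def by blast
  ultimately show ?thesis
    by blast
qed

lemma assoc_subalgebra_right_stabilizer:
  assumes R: "assoc_subalgebra s R" and hom: "\<And>\<rho>. \<rho> \<in> Y \<Longrightarrow> module_hom s s \<rho>"
    and zero: "(\<lambda>_. 0) \<in> Y"
    and add: "\<And>f g. f \<in> Y \<Longrightarrow> g \<in> Y \<Longrightarrow> (\<lambda>v. f v + g v) \<in> Y"
    and scale: "\<And>c f. f \<in> Y \<Longrightarrow> (\<lambda>v. s c (f v)) \<in> Y"
  shows "assoc_subalgebra s {g \<in> R. \<forall>\<rho>\<in>Y. \<rho> \<circ> g \<in> Y}"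
  unfolding assoc_subalgebra_def
proof (intro conjI ballI allI)
  have "\<rho> \<circ> (\<lambda>_. 0) \<in> Y" if "\<rho> \<in> Y" for \<rho>
    using hom[OF that] zero by (simp add: o_def module_hom.zero)
  then show "(\<lambda>_. 0) \<in> {g \<in> R. \<forall>\<rho>\<in>Y. \<rho> \<circ> g \<in> Y}"
    using R unfolding assoc_subalgebra_def by blast
next
  fix f g assume f: "f \<in> {g \<in> R. \<forall>\<rho>\<in>Y. \<rho> \<circ> g \<in> Y}" and g: "g \<in> {g \<in> R. \<forall>\<rho>\<in>Y. \<rho> \<circ> g \<in> Y}"
  have "\<rho> \<circ> (\<lambda>v. f v + g v) \<in> Y" if "\<rho> \<in> Y" for \<rho>
    using hom[OF that] add[of "\<rho> \<circ> f" "\<rho> \<circ> g"] f g that by (simp add: o_def module_hom.add)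
  then show "(\<lambda>v. f v + g v) \<in> {g \<in> R. \<forall>\<rho>\<in>Y. \<rho> \<circ> g \<in> Y}"
    using R f g unfolding assoc_subalgebra_def by blast
  have "\<rho> \<circ> (f \<circ> g) \<in> Y" if "\<rho> \<in> Y" for \<rho>
    using f g that by (simp add: comp_assoc[symmetric])
  then show "f \<circ> g \<in> {g \<in> R. \<forall>\<rho>\<in>Y. \<rho> \<circ> g \<in> Y}"
    using R f g unfolding assoc_subalgebra_def by blast
next
  fix c f assume f: "f \<in> {g \<in> R. \<forall>\<rho>\<in>Y. \<rho> \<circ> g \<in> Y}"
  have "\<rho> \<circ> (\<lambda>v. s c (f v)) \<in> Y" if "\<rho> \<in> Y" for \<rho>
    using hom[OF that] scale[of "\<rho> \<circ> f"] f that by (simp add: o_def module_hom.scale)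
  then show "(\<lambda>v. s c (f v)) \<in> {g \<in> R. \<forall>\<rho>\<in>Y. \<rho> \<circ> g \<in> Y}"
    using R f unfolding assoc_subalgebra_def by blast
qed

definition sandwich_annihilator :: "('q::zero \<Rightarrow> 'q) set \<Rightarrow> ('q \<Rightarrow> 'q) set \<Rightarrow> ('q \<Rightarrow> 'q) set" where
  "sandwich_annihilator R I = {\<rho> \<in> R. \<forall>\<mu>1\<in>I. \<forall>\<mu>2\<in>I. \<mu>1 \<circ> \<rho> \<circ> \<mu>2 = (\<lambda>_. 0)}"

lemma sandwich_annihilator_closed:
  fixes s :: "'r::comm_ring_1 \<Rightarrow> 'q::ab_group_add \<Rightarrow> 'q"
  assumes R: "assoc_subalgebra s R" and hom: "\<And>\<mu>. \<mu> \<in> I \<Longrightarrow> module_hom s s \<mu>"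
  shows "(\<lambda>_. 0) \<in> sandwich_annihilator R I"
    and "f \<in> sandwich_annihilator R I \<Longrightarrow> g \<in> sandwich_annihilator R I
      \<Longrightarrow> (\<lambda>v. f v + g v) \<in> sandwich_annihilator R I"
    and "f \<in> sandwich_annihilator R I
      \<Longrightarrow> (\<lambda>v. s c (f v)) \<in> sandwich_annihilator R I"
proof -
  have R_closed: "(\<lambda>_. 0) \<in> R" "f \<in> R \<Longrightarrow> g \<in> R \<Longrightarrow> (\<lambda>v. f v + g v) \<in> R"
    "f \<in> R \<Longrightarrow> (\<lambda>v. s c (f v)) \<in> R" for f g
    using R unfolding assoc_subalgebra_def by blast+
  show "(\<lambda>_. 0) \<in> sandwich_annihilator R I"
    using R_closed(1) hom[THEN module_hom.zero]
    unfolding sandwich_annihilator_def by (simp add: fun_eq_iff)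
  show "(\<lambda>v. f v + g v) \<in> sandwich_annihilator R I"
    if f: "f \<in> sandwich_annihilator R I" and g: "g \<in> sandwich_annihilator R I"
  proof -
    have "\<mu>1 \<circ> (\<lambda>v. f v + g v) \<circ> \<mu>2 = (\<lambda>_. 0)" if "\<mu>1 \<in> I" "\<mu>2 \<in> I" for \<mu>1 \<mu>2
      using f g that hom[OF that(1)] unfolding sandwich_annihilator_def
      by (auto simp: fun_eq_iff module_hom.add)
    then show ?thesis
      using f g R_closed(2) unfolding sandwich_annihilator_def by blast
  qed
  show "(\<lambda>v. s c (f v)) \<in> sandwich_annihilator R I" if f: "f \<in> sandwich_annihilator R I"
  proof -
    have "\<mu>1 \<circ> (\<lambda>v. s c (f v)) \<circ> \<mu>2 = (\<lambda>_. 0)" if "\<mu>1 \<in> I" "\<mu>2 \<in> I" for \<mu>1 \<mu>2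
    proof -
      have "module s"
        using hom[OF that(1)] module_hom_iff by blast
      then show ?thesis
        using f that hom[OF that(1)] unfolding sandwich_annihilator_def
        by (auto simp: fun_eq_iff module_hom.scale module.scale_zero_right)
    qed
    then show ?thesis
      using f R_closed(3) unfolding sandwich_annihilator_def by blast
  qed
qed

lemma lie_algebra_module: "lie_algebra s br \<Longrightarrow> module s"
  by (simp add: lie_algebra_def)

lemma lie_algebra_module_hom_bracket: "lie_algebra s br \<Longrightarrow> module_hom s s (br x)"
  by (simp add: lie_algebra_def module_hom_iff)

lemma lie_bracket_antisym:
  assumes "lie_algebra s br"
  shows "br x y = - br y x"
proof -
  have l: "br (x + y) z = br x z + br y z" and r: "br z (x + y) = br z x + br z y"
    and d: "br z z = 0" for x y z
    using assms unfolding lie_algebra_def by blast+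
  have "br (x + y) (x + y) = br x x + br x y + (br y x + br y y)"
    by (simp add: l r ac_simps)
  then have "br x y + br y x = 0"
    by (simp add: d)
  then show ?thesis
    by (simp add: eq_neg_iff_add_eq_0)
qed

lemma id_in_M_alg: "id \<in> M_alg s br"
  unfolding M_alg_def by (simp add: assoc_gen.gen)

lemma bracket_in_M_alg: "br x \<in> M_alg s br"
  unfolding M_alg_def by (simp add: assoc_gen.gen)

lemma assoc_subalgebra_M_alg: "assoc_subalgebra s (M_alg s br)"
  unfolding M_alg_def by (rule assoc_subalgebra_assoc_gen)

lemma A_alg_subset_M_alg: "A_alg s br \<subseteq> M_alg s br"
  unfolding A_alg_def M_alg_def by (rule assoc_gen_mono) blast

lemma M_alg_module_hom:
  assumes "lie_algebra s br" and "f \<in> M_alg s br"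
  shows "module_hom s s f"
proof -
  have "module s"
    using assms(1) by (rule lie_algebra_module)
  then have "M_alg s br \<subseteq> {f. module_hom s s f}"
    unfolding M_alg_def using assms(1)
    by (intro assoc_gen_least assoc_subalgebra_module_hom)
       (auto intro: module.module_hom_id lie_algebra_module_hom_bracket)
  then show ?thesis
    using assms(2) by blast
qed

lemma assoc_subalgebra_A0:
  assumes "lie_subalgebra s br L"
  shows "assoc_subalgebra s (A0 s br L)"
proof -
  have "assoc_subalgebra s (A_alg s br)"
    unfolding A_alg_def by (rule assoc_subalgebra_assoc_gen)
  then show ?thesis
    using assms unfolding assoc_subalgebra_def A0_def lie_subalgebra_def
    by (auto simp: image_subset_iff)
qed

lemma bracket_in_A0:
  assumes "lie_subalgebra s br L" and "z \<in> L"
  shows "br z \<in> A0 s br L"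
  using assms unfolding A0_def A_alg_def lie_subalgebra_def
  by (auto intro: assoc_gen.gen)

lemma dense_ext_sandwich_bracket_eq_zero:
  assumes la: "lie_algebra s br" and dense: "dense_ext s br L"
    and I_M: "I \<subseteq> M_alg s br" and I_left: "\<And>z \<mu>. z \<in> L \<Longrightarrow> \<mu> \<in> I \<Longrightarrow> br z \<circ> \<mu> \<in> I"
    and \<rho>: "\<rho> \<in> sandwich_annihilator (M_alg s br) I" and \<mu>1: "\<mu>1 \<in> I" and \<mu>2: "\<mu>2 \<in> I"
  shows "\<mu>1 \<circ> \<rho> \<circ> br x \<circ> \<mu>2 = (\<lambda>_. 0)"
proof -
  note M = assoc_subalgebra_M_alg[of s br]
  have M_dense: "\<mu> = (\<lambda>_. 0)" if "\<mu> \<in> M_alg s br" "\<forall>x\<in>L. \<mu> x = 0" for \<mu>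
    using dense that unfolding dense_ext_def by blast
  have \<nu>: "\<mu>1 \<circ> \<rho> \<in> M_alg s br"
    using M I_M \<mu>1 \<rho> unfolding assoc_subalgebra_def sandwich_annihilator_def by blast
  then have \<nu>_neg: "(\<mu>1 \<circ> \<rho>) (- v) = - (\<mu>1 \<circ> \<rho>) v" for v
    using M_alg_module_hom[OF la] module_hom.neg by blast
  have \<nu>_br_M: "\<mu>1 \<circ> \<rho> \<circ> br v \<in> M_alg s br" for v
    using M \<nu> bracket_in_M_alg unfolding assoc_subalgebra_def by blast
  have inner: "\<mu>1 \<circ> \<rho> \<circ> br (\<mu>2 y) = (\<lambda>_. 0)" for y
  proof (rule M_dense[OF \<nu>_br_M], intro ballI)
    fix z assume "z \<in> L"
    then have "\<mu>1 \<circ> \<rho> \<circ> (br z \<circ> \<mu>2) = (\<lambda>_. 0)"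
      using \<rho> \<mu>1 \<mu>2 I_left unfolding sandwich_annihilator_def by blast
    then show "(\<mu>1 \<circ> \<rho> \<circ> br (\<mu>2 y)) z = 0"
      using \<nu>_neg lie_bracket_antisym[OF la, of "\<mu>2 y" z] by (simp add: fun_eq_iff)
  qed
  show ?thesis
  proof (rule M_dense)
    show "\<mu>1 \<circ> \<rho> \<circ> br x \<circ> \<mu>2 \<in> M_alg s br"
      using M \<nu>_br_M I_M \<mu>2 unfolding assoc_subalgebra_def by blast
    show "\<forall>y\<in>L. (\<mu>1 \<circ> \<rho> \<circ> br x \<circ> \<mu>2) y = 0"
    proof
      fix y
      show "(\<mu>1 \<circ> \<rho> \<circ> br x \<circ> \<mu>2) y = 0"
        using \<nu>_neg inner[of y] lie_bracket_antisym[OF la, of x "\<mu>2 y"] by (simp add: fun_eq_iff)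
    qed
  qed
qed

lemma dense_ext_sandwich_annihilator_bracket:
  assumes la: "lie_algebra s br" and dense: "dense_ext s br L"
    and I_M: "I \<subseteq> M_alg s br" and I_left: "\<And>z \<mu>. z \<in> L \<Longrightarrow> \<mu> \<in> I \<Longrightarrow> br z \<circ> \<mu> \<in> I"
    and \<rho>: "\<rho> \<in> sandwich_annihilator (M_alg s br) I"
  shows "\<rho> \<circ> br x \<in> sandwich_annihilator (M_alg s br) I"
proof -
  have "\<rho> \<circ> br x \<in> M_alg s br"
    using assoc_subalgebra_M_alg \<rho> bracket_in_M_alg
    unfolding assoc_subalgebra_def sandwich_annihilator_def by blast
  then show ?thesis
    using dense_ext_sandwich_bracket_eq_zero[OF la dense I_M I_left \<rho>]
    unfolding sandwich_annihilator_def by (simp add: comp_assoc)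
qed

lemma dense_ext_square_zero_ideal_sandwich_annihilator:
  assumes la: "lie_algebra s br" and L: "lie_subalgebra s br L" and dense: "dense_ext s br L"
    and I: "assoc_ideal s (A0 s br L) I" and square_zero: "\<forall>f\<in>I. \<forall>g\<in>I. f \<circ> g = (\<lambda>_. 0)"
  shows "M_alg s br \<subseteq> sandwich_annihilator (M_alg s br) I"
proof -
  define Y where "Y = sandwich_annihilator (M_alg s br) I"
  note M = assoc_subalgebra_M_alg[of s br]
  have I_M: "I \<subseteq> M_alg s br"
    using I A_alg_subset_M_alg unfolding assoc_ideal_def A0_def by blast
  have I_left: "br z \<circ> \<mu> \<in> I" if "z \<in> L" "\<mu> \<in> I" for z \<mu>
    using I bracket_in_A0[OF L] that unfolding assoc_ideal_def by blast
  have I_hom: "module_hom s s \<mu>" if "\<mu> \<in> I" for \<mu>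
    using M_alg_module_hom[OF la] I_M that by blast
  have "module_hom s s \<rho>" if "\<rho> \<in> Y" for \<rho>
    using M_alg_module_hom[OF la] that unfolding Y_def sandwich_annihilator_def by blast
  then have stabilizer: "assoc_subalgebra s {g \<in> M_alg s br. \<forall>\<rho>\<in>Y. \<rho> \<circ> g \<in> Y}"
    unfolding Y_def
    by (rule assoc_subalgebra_right_stabilizer[OF M])
      (auto intro: sandwich_annihilator_closed[OF M I_hom])
  have "insert id (range br) \<subseteq> {g \<in> M_alg s br. \<forall>\<rho>\<in>Y. \<rho> \<circ> g \<in> Y}"
    using id_in_M_alg bracket_in_M_alg dense_ext_sandwich_annihilator_bracket[OF la dense I_M I_left]
    unfolding Y_def by auto
  with stabilizer have "M_alg s br \<subseteq> {g \<in> M_alg s br. \<forall>\<rho>\<in>Y. \<rho> \<circ> g \<in> Y}"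
    unfolding M_alg_def by (rule assoc_gen_least)
  moreover have "id \<in> Y"
    using square_zero id_in_M_alg unfolding Y_def sandwich_annihilator_def by simp
  ultimately show ?thesis
    unfolding Y_def by fastforce
qed

lemma assoc_semiprime_A0:
  assumes la: "lie_algebra s br" and L: "lie_subalgebra s br L" and dense: "dense_ext s br L"
    and semiprime: "assoc_semiprime s (M_alg s br)"
  shows "assoc_semiprime s (A0 s br L)"
  unfolding assoc_semiprime_def
proof (intro allI impI, elim conjE)
  fix I assume I: "assoc_ideal s (A0 s br L) I" and square_zero: "\<forall>f\<in>I. \<forall>g\<in>I. f \<circ> g = (\<lambda>_. 0)"
  have "\<mu> = (\<lambda>_. 0)" if "\<mu> \<in> I" for \<mu>
  proof (rule assoc_semiprime_sandwich_eq_zero[OF semiprime])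
    show "\<mu> \<in> M_alg s br"
      using I A_alg_subset_M_alg that unfolding assoc_ideal_def A0_def by blast
    show "\<forall>\<rho>\<in>M_alg s br. \<mu> \<circ> \<rho> \<circ> \<mu> = (\<lambda>_. 0)"
      using dense_ext_square_zero_ideal_sandwich_annihilator[OF la L dense I square_zero] that
      unfolding sandwich_annihilator_def by blast
  qed (auto intro: assoc_subalgebra_M_alg id_in_M_alg M_alg_module_hom[OF la])
  then show "I = {\<lambda>_. 0}"
    using I unfolding assoc_ideal_def by blast
qed

theorem mainTheorem15:
  fixes s :: "'r::comm_ring_1 \<Rightarrow> 'q::ab_group_add \<Rightarrow> 'q"
    and br :: "'q \<Rightarrow> 'q \<Rightarrow> 'q"
    and L :: "'q set"
  assumes "lie_algebra s br"
    and "lie_subalgebra s br L"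
    and "dense_ext s br L"
    and "mult_semiprime s br"
  shows "assoc_subalgebra s (A0 s br L) \<and> assoc_semiprime s (A0 s br L)"
proof -
  have "assoc_semiprime s (M_alg s br)"
    using assms(4) unfolding mult_semiprime_def by blast
  then show ?thesis
    using assoc_subalgebra_A0[OF assms(2)] assoc_semiprime_A0[OF assms(1-3)] by blast
qed

end
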